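(* Let $\kappa\ge1$, $0\le s\le t<\infty$, and $E=e^{-c((t-s)^{1/\kappa}+s^{1/\kappa}-t^{1/\kappa})\Lambda_1}$. Then $E$ is either the identity operator or a Fourier multiplier with an $L^1$ kernel whose $L^1$ norm is bounded independently of $s,t$.
   Context: $\Lambda_1$ is the Fourier multiplier on $\mathbb R^d$ with symbol $\sum_i|\xi_i|$; $c>0$ is a fixed constant. *)

theory Defs
  imports "HOL-Analysis.Analysis"
begin

definition fourier_transform :: "(real^'n \<Rightarrow> complex) \<Rightarrow> real^'n \<Rightarrow> complex" where
  "fourier_transform K \<xi> = (LINT x|lborel. K x * cis (- (x \<bullet> \<xi>)))"

definition Lambda1_symbol :: "real^'n \<Rightarrow> real" where
  "Lambda1_symbol \<xi> = (\<Sum>i\<in>UNIV. \<bar>\<xi> $ i\<bar>)"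

definition E_symbol :: "real \<Rightarrow> real \<Rightarrow> real \<Rightarrow> real \<Rightarrow> real^'n \<Rightarrow> real" where
  "E_symbol c \<kappa> s t \<xi> =
     exp (- c * ((t - s) powr (1/\<kappa>) + s powr (1/\<kappa>) - t powr (1/\<kappa>)) * Lambda1_symbol \<xi>)"

definition multiplier_with_L1_kernel :: "(real^'n \<Rightarrow> real) \<Rightarrow> real \<Rightarrow> bool" where
  "multiplier_with_L1_kernel m M \<longleftrightarrow>
     (\<exists>K. integrable lborel K \<and>
          (\<forall>\<xi>. fourier_transform K \<xi> = complex_of_real (m \<xi>)) \<and>
          (LINT x|lborel. norm (K x)) \<le> M)"

end

theory Submission
  imports Defs "HOL-Complex_Analysis.Complex_Analysis"
begin

(*
  The exponent lambda = c ((t - s) powr (1/kappa) + s powr (1/kappa) - t powr (1/kappa)) is nonnegative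
  because r \<mapsto> r powr (1/kappa) is subadditive.  If lambda = 0 the symbol is identically 1.  If
  lambda > 0, exp (- lambda Lambda_1) is the Fourier transform of the tensor product of one-dimensional
  Poisson kernels lambda / (pi (x^2 + lambda^2)); this is a probability density, so the L^1 norm of the
  kernel is 1 whatever s and t are.

  The one-dimensional transform of the Poisson kernel is exp (- lambda |omega|): for omega >= 0, integrate
  exp (i omega z) / (z^2 + lambda^2) around the triangle with vertices -R, R, i R.  By Cauchy's formula
  the contour integral is the residue contribution pi exp (- omega lambda) / lambda at i lambda, while
  on the two upper sides the integrand is O(1/R^2), so their contribution vanishes as R \<rightarrow> \<infinity>.
*)

lemma powr_add_le_add_powr:
  fixes x y p :: real
  assumes x: "x \<ge> 0" and y: "y \<ge> 0" and p: "0 < p" "p \<le> 1"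
  shows "(x + y) powr p \<le> x powr p + y powr p"
proof (cases "x + y = 0")
  case True
  then show ?thesis using x y by simp
next
  case False
  define T where "T = x + y"
  have T: "T > 0" using False x y unfolding T_def by simp
  have le_powr: "u \<le> u powr p" if "0 \<le> u" "u \<le> 1" for u :: real
    using powr_mono'[of p 1 u] that p by simp
  have "1 = x/T + y/T" using T by (simp add: T_def add_divide_distrib[symmetric])
  also have "\<dots> \<le> (x/T) powr p + (y/T) powr p"
    using x y T by (intro add_mono le_powr) (auto simp: T_def)
  also have "\<dots> = (x powr p + y powr p) / T powr p" by (simp add: powr_divide add_divide_distrib)
  finally have "T powr p \<le> x powr p + y powr p" using T by (simp add: field_simps)
  then show ?thesis by (simp add: T_def)
qed

lemma integrable_inverse_square_plus_square:
  fixes l :: real assumes l: "l > 0"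
  shows "integrable lborel (\<lambda>x::real. 1 / (x\<^sup>2 + l\<^sup>2))"
proof -
  let ?h = "\<lambda>x::real. indicator {0..} x * (1 / (x\<^sup>2 + l\<^sup>2))"
  have "(\<integral>\<^sup>+x. ennreal (1 / (x\<^sup>2 + l\<^sup>2)) * indicator {0..} x \<partial>lborel) = ennreal (pi/2/l - arctan (0/l)/l)"
  proof (rule nn_integral_FTC_atLeast)
    have "filterlim (\<lambda>x. x * inverse l) at_top at_top"
      using l by (intro filterlim_at_top_mult_tendsto_pos[OF tendsto_const] filterlim_ident) auto
    then have "filterlim (\<lambda>x. x / l) at_top at_top" by (simp add: divide_inverse)
    then show "((\<lambda>x. arctan (x/l)/l) \<longlongrightarrow> pi/2/l) at_top"
      using l by (intro tendsto_intros filterlim_compose[OF tendsto_arctan_at_top]) auto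
    show "DERIV (\<lambda>x. arctan (x/l)/l) x :> 1 / (x\<^sup>2 + l\<^sup>2)" for x
    proof -
      have "x\<^sup>2 + l\<^sup>2 > 0" using l by (simp add: add_nonneg_pos)
      then show ?thesis
        using l by (auto intro!: derivative_eq_intros simp: divide_simps power2_eq_square)
    qed
  qed (use l in \<open>auto intro!: add_nonneg_pos\<close>)
  then have "(\<integral>\<^sup>+x. ennreal (?h x) \<partial>lborel) < \<infinity>"
    by (simp add: indicator_mult_ennreal mult.commute)
  then have "integrable lborel ?h"
    by (intro integrableI_nonneg) (auto simp: indicator_def)
  moreover from this have "integrable lborel (\<lambda>x. ?h (0 + (-1) * x))"
    by (rule lborel_integrable_real_affine) simp
  ultimately have "integrable lborel (\<lambda>x. ?h x + ?h (0 + (-1) * x))"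
    by (rule Bochner_Integration.integrable_add)
  then show ?thesis
    by (rule Bochner_Integration.integrable_bound)
       (use l in \<open>auto simp: indicator_def add_pos_nonneg\<close>)
qed

lemma closed_segment_Re_Im:
  assumes "z \<in> closed_segment a b"
  obtains u where "0 \<le> u" "u \<le> 1" "Re z = (1 - u) * Re a + u * Re b" "Im z = (1 - u) * Im a + u * Im b"
  using assms by (auto simp: closed_segment_def scaleR_conv_of_real)

definition upper_triangle :: "real \<Rightarrow> real \<Rightarrow> complex" where
  "upper_triangle R = linepath (- of_real R) (of_real R) +++ linepath (of_real R) (\<i> * of_real R)
                        +++ linepath (\<i> * of_real R) (- of_real R)"

lemma path_image_upper_triangle:
  "path_image (upper_triangle R) = closed_segment (- of_real R) (of_real R)
     \<union> closed_segment (of_real R) (\<i> * of_real R) \<union> closed_segment (\<i> * of_real R) (- of_real R)"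
  by (auto simp: upper_triangle_def path_image_join)

lemma Im_nonneg_on_upper_triangle:
  assumes "R \<ge> 0" and "z \<in> path_image (upper_triangle R)"
  shows "Im z \<ge> 0"
  using assms(2) unfolding path_image_upper_triangle
  by (auto elim!: closed_segment_Re_Im intro!: mult_nonneg_nonneg simp: assms(1))

lemma imaginary_point_notin_upper_triangle:
  assumes l: "0 < l" and R: "l < R"
  shows "\<i> * of_real l \<notin> path_image (upper_triangle R)"
proof -
  have "\<i> * of_real l \<notin> closed_segment (- of_real R) (of_real R)"
    using l by (auto elim!: closed_segment_Re_Im)
  moreover have "\<i> * of_real l \<notin> closed_segment (of_real R) (\<i> * of_real R)"
  proof
    assume "\<i> * of_real l \<in> closed_segment (of_real R) (\<i> * of_real R)"
    then obtain u where "0 = (1 - u) * R" "l = u * R"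
      by (auto elim!: closed_segment_Re_Im)
    then show False using l R by auto
  qed
  moreover have "\<i> * of_real l \<notin> closed_segment (\<i> * of_real R) (- of_real R)"
  proof
    assume "\<i> * of_real l \<in> closed_segment (\<i> * of_real R) (- of_real R)"
    then obtain u where "0 = u * (- R)" "l = (1 - u) * R"
      by (auto elim!: closed_segment_Re_Im)
    then show False using l R by auto
  qed
  ultimately show ?thesis unfolding path_image_upper_triangle by blast
qed

lemma winding_number_upper_triangle:
  assumes l: "0 < l" and R: "l < R"
  shows "winding_number (upper_triangle R) (\<i> * of_real l) = 1"
proof -
  let ?T = "convex hull {- of_real R, of_real R, \<i> * of_real R :: complex}"
  have "\<i> * of_real l = ((1 - l/R)/2) *\<^sub>R (- of_real R) + ((1 - l/R)/2) *\<^sub>R of_real R + (l/R) *\<^sub>R (\<i> * of_real R)"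
    using R l by (simp add: complex_eq_iff scaleR_conv_of_real)
  moreover have "0 \<le> (1 - l/R)/2" "0 \<le> l/R" "(1 - l/R)/2 + (1 - l/R)/2 + l/R = 1"
    using R l by (auto simp: field_simps)
  ultimately have "\<i> * of_real l \<in> ?T" unfolding convex_hull_3 by blast
  then have "\<i> * of_real l \<in> interior ?T"
    using imaginary_point_notin_upper_triangle[OF l R]
    by (subst interior_of_triangle)
       (auto simp: path_image_upper_triangle segment_convex_hull insert_commute)
  then show ?thesis
    unfolding upper_triangle_def using winding_number_triangle R l by simp
qed

definition cauchy_exp_integrand :: "real \<Rightarrow> real \<Rightarrow> complex \<Rightarrow> complex" where
  "cauchy_exp_integrand \<omega> l z = exp (\<i> * of_real \<omega> * z) / (z\<^sup>2 + (of_real l)\<^sup>2)"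

lemma has_contour_integral_upper_triangle:
  assumes l: "0 < l" and R: "l < R"
  shows "(cauchy_exp_integrand \<omega> l has_contour_integral of_real (pi * exp (- \<omega> * l) / l)) (upper_triangle R)"
proof -
  define g where "g z = exp (\<i> * of_real \<omega> * z) / (z + \<i> * of_real l)" for z
  define S where "S = {z. Im z > - l}"
  have "g holomorphic_on S"
    unfolding g_def S_def
  proof (intro holomorphic_intros)
    show "z + \<i> * of_real l \<noteq> 0" if "z \<in> {z. - l < Im z}" for z
      using that by (auto simp: complex_eq_iff)
  qed
  moreover have "path_image (upper_triangle R) \<subseteq> S - {\<i> * of_real l}"
    using Im_nonneg_on_upper_triangle[of R] imaginary_point_notin_upper_triangle[OF l R] l R
    unfolding S_def by force
  moreover have "\<i> * of_real l \<in> interior S"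
    unfolding S_def using l by (simp add: interior_open open_halfspace_Im_gt)
  ultimately have "((\<lambda>z. g z / (z - \<i> * of_real l)) has_contour_integral
      (2 * pi * \<i> * winding_number (upper_triangle R) (\<i> * of_real l) * g (\<i> * of_real l))) (upper_triangle R)"
    by (intro Cauchy_integral_formula_convex_simple)
       (auto simp: S_def convex_halfspace_Im_gt upper_triangle_def)
  moreover have "g z / (z - \<i> * of_real l) = cauchy_exp_integrand \<omega> l z" for z
  proof -
    have "z\<^sup>2 + (of_real l)\<^sup>2 = (z + \<i> * of_real l) * (z - \<i> * of_real l)"
      by (simp add: power2_eq_square algebra_simps)
    then show ?thesis by (simp add: g_def cauchy_exp_integrand_def)
  qed
  moreover have "2 * pi * \<i> * g (\<i> * of_real l) = of_real (pi * exp (- \<omega> * l) / l)"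
  proof -
    have "exp (- (complex_of_real \<omega> * complex_of_real l)) = of_real (exp (- (\<omega> * l)))"
      by (metis exp_of_real of_real_minus of_real_mult)
    then show ?thesis using l by (simp add: g_def field_simps of_real_mult)
  qed
  ultimately show ?thesis
    using winding_number_upper_triangle[OF l R] by simp
qed

lemma continuous_on_cauchy_exp_integrand_upper_triangle:
  assumes l: "0 < l" and R: "l < R"
  shows "continuous_on (path_image (upper_triangle R)) (cauchy_exp_integrand \<omega> l)"
proof -
  have "z\<^sup>2 + (of_real l)\<^sup>2 \<noteq> 0" if "z \<in> path_image (upper_triangle R)" for z
  proof
    assume "z\<^sup>2 + (of_real l)\<^sup>2 = 0"
    then have "(z + \<i> * of_real l) * (z - \<i> * of_real l) = 0"
      by (simp add: power2_eq_square algebra_simps)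
    then have "z = - (\<i> * of_real l) \<or> z = \<i> * of_real l"
      by (auto simp: eq_neg_iff_add_eq_0)
    then show False
      using Im_nonneg_on_upper_triangle[of R z] imaginary_point_notin_upper_triangle[OF l R] that l R
      by auto
  qed
  then show ?thesis
    unfolding cauchy_exp_integrand_def by (intro continuous_intros) auto
qed

lemma norm_cauchy_exp_integrand_le:
  assumes l: "l > 0" and R: "R \<ge> 2 * l" and \<omega>: "\<omega> \<ge> 0"
    and Im: "Im z \<ge> 0" and z: "R\<^sup>2 / 2 \<le> (cmod z)\<^sup>2"
  shows "norm (cauchy_exp_integrand \<omega> l z) \<le> 4 / R\<^sup>2"
proof -
  have "norm (exp (\<i> * of_real \<omega> * z)) \<le> 1"
    using \<omega> Im by (simp add: mult_nonneg_nonneg)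
  moreover have "R\<^sup>2 / 4 \<le> norm (z\<^sup>2 + (of_real l)\<^sup>2)"
  proof -
    have "(2 * l)\<^sup>2 \<le> R\<^sup>2" using R l by (intro power_mono) auto
    then have "R\<^sup>2 / 4 \<le> (cmod z)\<^sup>2 - l\<^sup>2" using z by (simp add: power_mult_distrib)
    also have "\<dots> \<le> norm (z\<^sup>2 + (of_real l)\<^sup>2)"
      using norm_triangle_ineq4[of "z\<^sup>2 + (of_real l)\<^sup>2" "(of_real l)\<^sup>2"] by (simp add: norm_power)
    finally show ?thesis .
  qed
  moreover have "R\<^sup>2 / 4 > 0" using R l by simp
  ultimately have "norm (exp (\<i> * of_real \<omega> * z)) / norm (z\<^sup>2 + (of_real l)\<^sup>2) \<le> 1 / (R\<^sup>2 / 4)"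
    by (intro frac_le) auto
  then show ?thesis by (simp add: cauchy_exp_integrand_def norm_divide)
qed

lemma norm_contour_integral_upper_side_le:
  assumes l: "l > 0" and R: "R \<ge> 2 * l" and \<omega>: "\<omega> \<ge> 0"
    and side: "(a, b) = (of_real R, \<i> * of_real R) \<or> (a, b) = (\<i> * of_real R, - of_real R)"
    and J: "(cauchy_exp_integrand \<omega> l has_contour_integral J) (linepath a b)"
  shows "norm J \<le> 8 / R"
proof -
  have bound: "norm (cauchy_exp_integrand \<omega> l z) \<le> 4 / R\<^sup>2" if z: "z \<in> closed_segment a b" for z
  proof -
    obtain u where u: "0 \<le> u" "u \<le> 1"
      and on_side: "(Re z = (1 - u) * R \<and> Im z = u * R) \<or> (Re z = - (u * R) \<and> Im z = (1 - u) * R)"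
      using z side by (auto elim!: closed_segment_Re_Im)
    have Im: "Im z \<ge> 0" using on_side u R l by auto
    have "(cmod z)\<^sup>2 = R\<^sup>2 * ((1 - u)\<^sup>2 + u\<^sup>2)"
      using on_side unfolding cmod_power2
      by (elim disjE conjE) (simp_all (no_asm_simp) add: power2_eq_square algebra_simps)
    moreover have "1/2 \<le> (1 - u)\<^sup>2 + u\<^sup>2"
    proof -
      have "(1 - u)\<^sup>2 + u\<^sup>2 = 1/2 + 2 * (u - 1/2)\<^sup>2"
        by (simp add: power2_eq_square algebra_simps)
      then show ?thesis by simp
    qed
    ultimately have "R\<^sup>2 / 2 \<le> (cmod z)\<^sup>2"
      using mult_left_mono[of "1/2" "(1 - u)\<^sup>2 + u\<^sup>2" "R\<^sup>2"] by simp
    then show ?thesis using norm_cauchy_exp_integrand_le[OF l R \<omega> Im] by simp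
  qed
  have "norm (b - a) \<le> norm b + norm a" by (rule norm_triangle_ineq4)
  also have "\<dots> = 2 * R" using side R l by (auto simp: norm_mult)
  finally have length: "norm (b - a) \<le> 2 * R" .
  have "norm J \<le> 4 / R\<^sup>2 * norm (b - a)"
    using has_contour_integral_bound_linepath[OF J _ bound] by simp
  also have "\<dots> \<le> 4 / R\<^sup>2 * (2 * R)" using length by (intro mult_left_mono) auto
  also have "\<dots> = 8 / R" using R l by (simp add: power2_eq_square)
  finally show ?thesis .
qed

lemma truncated_integral_cauchy_exp_integrand:
  assumes l: "l > 0" and R: "R \<ge> 2 * l" and \<omega>: "\<omega> \<ge> 0"
  obtains J where "((\<lambda>x. cauchy_exp_integrand \<omega> l (of_real x)) has_integral J) {-R..R}"
    and "norm (J - of_real (pi * exp (- \<omega> * l) / l)) \<le> 16 / R"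
proof -
  let ?f = "cauchy_exp_integrand \<omega> l"
  have lR: "l < R" using l R by simp
  have cont: "continuous_on (path_image (upper_triangle R)) ?f"
    by (rule continuous_on_cauchy_exp_integrand_upper_triangle[OF l lR])
  have "?f contour_integrable_on linepath a b"
    if "closed_segment a b \<subseteq> path_image (upper_triangle R)" for a b
    using continuous_on_subset[OF cont that] by (rule contour_integrable_continuous_linepath)
  then obtain J1 J2 J3
    where J1: "(?f has_contour_integral J1) (linepath (- of_real R) (of_real R))"
      and J2: "(?f has_contour_integral J2) (linepath (of_real R) (\<i> * of_real R))"
      and J3: "(?f has_contour_integral J3) (linepath (\<i> * of_real R) (- of_real R))"
    unfolding path_image_upper_triangle contour_integrable_on_def by (meson Un_upper1 Un_upper2 le_supI1)
  have "(?f has_contour_integral (J1 + (J2 + J3))) (upper_triangle R)"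
    unfolding upper_triangle_def by (intro has_contour_integral_join J1 J2 J3 valid_path_join) auto
  then have sum: "J1 + (J2 + J3) = of_real (pi * exp (- \<omega> * l) / l)"
    using has_contour_integral_upper_triangle[OF l lR] has_contour_integral_unique by blast
  have "norm (J1 - of_real (pi * exp (- \<omega> * l) / l)) = norm (J2 + J3)"
    unfolding sum[symmetric] by (simp add: norm_minus_commute add.commute)
  also have "\<dots> \<le> norm J2 + norm J3" by (rule norm_triangle_ineq)
  also have "\<dots> \<le> 16 / R"
    using norm_contour_integral_upper_side_le[OF l R \<omega> _ J2] norm_contour_integral_upper_side_le[OF l R \<omega> _ J3]
    by simp
  finally show ?thesis
    using that J1 lR l by (simp add: has_contour_integral_linepath_Reals_iff)
qed

lemma integrable_cauchy_exp_integrand: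
  assumes l: "l > 0"
  shows "integrable lborel (\<lambda>x. cauchy_exp_integrand \<omega> l (of_real x))"
proof (rule Bochner_Integration.integrable_bound[OF integrable_inverse_square_plus_square[OF l]])
  show "(\<lambda>x. cauchy_exp_integrand \<omega> l (of_real x)) \<in> borel_measurable lborel"
    unfolding cauchy_exp_integrand_def by measurable
  show "AE x in lborel. norm (cauchy_exp_integrand \<omega> l (of_real x)) \<le> norm (1 / (x\<^sup>2 + l\<^sup>2))"
  proof (rule AE_I2)
    fix x :: real
    have "x\<^sup>2 + l\<^sup>2 > 0" using l by (simp add: add_nonneg_pos)
    moreover have "norm (exp (\<i> * of_real \<omega> * of_real x)) = 1"
      by (metis norm_exp_i_times of_real_mult mult.assoc)
    moreover have "(of_real x)\<^sup>2 + (of_real l)\<^sup>2 = (of_real (x\<^sup>2 + l\<^sup>2) :: complex)" by simp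
    ultimately show "norm (cauchy_exp_integrand \<omega> l (of_real x)) \<le> norm (1 / (x\<^sup>2 + l\<^sup>2))"
      by (simp add: cauchy_exp_integrand_def norm_divide del: of_real_add of_real_power)
  qed
qed

lemma tendsto_integral_symmetric_truncation:
  fixes F :: "real \<Rightarrow> 'a::euclidean_space"
  assumes F: "integrable lborel F"
  shows "(\<lambda>n::nat. integral {- real n..real n} F) \<longlonglongrightarrow> (LINT x|lborel. F x)"
proof -
  have "(\<lambda>n::nat. LINT x|lborel. indicator {- real n..real n} x *\<^sub>R F x) \<longlonglongrightarrow> (LINT x|lborel. F x)"
  proof (rule integral_dominated_convergence[where w = "\<lambda>x. norm (F x)"])
    show "AE x in lborel. (\<lambda>n. indicator {- real n..real n} x *\<^sub>R F x) \<longlonglongrightarrow> F x"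
    proof (rule AE_I2)
      fix x :: real
      obtain N :: nat where N: "\<bar>x\<bar> \<le> real N" using real_arch_simple by blast
      have "eventually (\<lambda>n. indicator {- real n..real n} x *\<^sub>R F x = F x) sequentially"
        using eventually_ge_at_top[of N] by eventually_elim (use N in \<open>auto simp: indicator_def\<close>)
      then show "(\<lambda>n. indicator {- real n..real n} x *\<^sub>R F x) \<longlonglongrightarrow> F x"
        by (rule tendsto_eventually)
    qed
  qed (use F in \<open>auto simp: indicator_def\<close>)
  moreover have "(LINT x|lborel. indicator {- real n..real n} x *\<^sub>R F x) = integral {- real n..real n} F" for n
  proof -
    have "set_integrable lborel {- real n..real n} F"
      unfolding set_integrable_def using F by (intro integrable_mult_indicator) auto
    then show ?thesis
      using set_borel_integral_eq_integral(2) by (simp add: set_lebesgue_integral_def)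
  qed
  ultimately show ?thesis by simp
qed

lemma integral_cauchy_exp_integrand_nonneg:
  assumes l: "l > 0" and \<omega>: "\<omega> \<ge> 0"
  shows "(LINT x|lborel. cauchy_exp_integrand \<omega> l (of_real x)) = of_real (pi * exp (- \<omega> * l) / l)"
proof -
  let ?F = "\<lambda>x. cauchy_exp_integrand \<omega> l (of_real x)"
  let ?L = "of_real (pi * exp (- \<omega> * l) / l) :: complex"
  obtain N :: nat where N: "2 * l \<le> real N" using real_arch_simple by blast
  have "eventually (\<lambda>n. norm (integral {- real n..real n} ?F - ?L) \<le> 16 / real n) sequentially"
    using eventually_ge_at_top[of N]
  proof eventually_elim
    case (elim n)
    then have "2 * l \<le> real n" using N by linarith
    then show ?case
      by (rule truncated_integral_cauchy_exp_integrand[OF l _ \<omega>]) (auto dest: integral_unique)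
  qed
  moreover have "(\<lambda>n::nat. 16 / real n) \<longlonglongrightarrow> 0"
    by (intro tendsto_divide_0[OF tendsto_const] filterlim_at_top_imp_at_infinity[OF filterlim_real_sequentially])
  ultimately have "(\<lambda>n::nat. integral {- real n..real n} ?F - ?L) \<longlonglongrightarrow> 0"
    by (rule Lim_null_comparison)
  then have "(\<lambda>n::nat. integral {- real n..real n} ?F) \<longlonglongrightarrow> ?L"
    by (simp add: LIM_zero_iff)
  with tendsto_integral_symmetric_truncation[OF integrable_cauchy_exp_integrand[OF l]]
  show ?thesis by (rule LIMSEQ_unique)
qed

lemma integral_cauchy_exp_integrand:
  assumes l: "l > 0"
  shows "(LINT x|lborel. cauchy_exp_integrand \<omega> l (of_real x)) = of_real (pi * exp (- \<bar>\<omega>\<bar> * l) / l)"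
proof (cases "\<omega> \<ge> 0")
  case True
  then show ?thesis using integral_cauchy_exp_integrand_nonneg[OF l] by simp
next
  case False
  have "(LINT x|lborel. cauchy_exp_integrand \<omega> l (of_real x))
      = \<bar>-1\<bar> *\<^sub>R (LINT x|lborel. cauchy_exp_integrand \<omega> l (of_real (0 + (-1) * x)))"
    by (rule lborel_integral_real_affine) simp
  also have "\<dots> = (LINT x|lborel. cauchy_exp_integrand (- \<omega>) l (of_real x))"
    by (simp add: cauchy_exp_integrand_def)
  also have "\<dots> = of_real (pi * exp (- \<bar>\<omega>\<bar> * l) / l)"
    using False integral_cauchy_exp_integrand_nonneg[OF l, of "- \<omega>"] by simp
  finally show ?thesis .
qed

definition poisson_kernel :: "real \<Rightarrow> real \<Rightarrow> real" where
  "poisson_kernel l x = l / (pi * (x\<^sup>2 + l\<^sup>2))"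

lemma poisson_kernel_nonneg: "l \<ge> 0 \<Longrightarrow> poisson_kernel l x \<ge> 0"
  by (simp add: poisson_kernel_def)

lemma poisson_kernel_cis_eq:
  "complex_of_real (poisson_kernel l x) * cis (- (x * \<omega>))
     = of_real (l / pi) * cauchy_exp_integrand (- \<omega>) l (of_real x)"
  by (simp add: poisson_kernel_def cauchy_exp_integrand_def cis_conv_exp mult.commute mult.left_commute)

lemma integrable_poisson_kernel_cis:
  assumes "l > 0"
  shows "integrable lborel (\<lambda>x. complex_of_real (poisson_kernel l x) * cis (- (x * \<omega>)))"
  unfolding poisson_kernel_cis_eq by (intro integrable_mult_right integrable_cauchy_exp_integrand assms)

lemma fourier_poisson_kernel:
  assumes l: "l > 0"
  shows "(LINT x|lborel. complex_of_real (poisson_kernel l x) * cis (- (x * \<omega>))) = exp (- (l * \<bar>\<omega>\<bar>))"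
proof -
  have "(LINT x|lborel. complex_of_real (poisson_kernel l x) * cis (- (x * \<omega>)))
      = of_real (l / pi) * (LINT x|lborel. cauchy_exp_integrand (- \<omega>) l (of_real x))"
    unfolding poisson_kernel_cis_eq by (rule integral_mult_right_zero)
  also have "\<dots> = of_real (l / pi * (pi * exp (- \<bar>\<omega>\<bar> * l) / l))"
    unfolding integral_cauchy_exp_integrand[OF l] by simp
  also have "\<dots> = exp (- (l * \<bar>\<omega>\<bar>))"
    using l by (simp add: mult.commute)
  finally show ?thesis .
qed

lemma integrable_poisson_kernel:
  assumes "l > 0"
  shows "integrable lborel (poisson_kernel l)"
  using integrable_poisson_kernel_cis[OF assms, of 0] by (simp add: complex_of_real_integrable_eq)

lemma integral_poisson_kernel:
  assumes "l > 0"
  shows "(LINT x|lborel. poisson_kernel l x) = 1"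
  using fourier_poisson_kernel[OF assms, of 0] by simp

lemma
  fixes f :: "'a::euclidean_space \<Rightarrow> real \<Rightarrow> 'b::{real_normed_field,banach,second_countable_topology}"
  assumes int: "\<And>b. b \<in> Basis \<Longrightarrow> integrable lborel (f b)"
  shows integrable_prod_Basis: "integrable lborel (\<lambda>x. \<Prod>b\<in>Basis. f b (x \<bullet> b))"
    and integral_prod_Basis: "(LINT x|lborel. (\<Prod>b\<in>Basis. f b (x \<bullet> b))) = (\<Prod>b\<in>Basis. LINT y|lborel. f b y)"
proof -
  interpret product_sigma_finite "\<lambda>_::'a. lborel" by standard
  have [measurable]: "f b \<in> borel_measurable borel" if "b \<in> Basis" for b
    using int[OF that] by (simp add: borel_measurable_integrable measurable_lborel2 del: measurable_lborel1)
  have T: "(\<lambda>g. \<Sum>b\<in>Basis. g b *\<^sub>R b) \<in> measurable (\<Pi>\<^sub>M b\<in>(Basis::'a set). lborel) borel"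
    by measurable
  have F: "(\<lambda>x::'a. \<Prod>b\<in>Basis. f b (x \<bullet> b)) \<in> borel_measurable borel"
    by measurable
  have coords: "(\<Prod>b\<in>Basis. f b ((\<Sum>b'\<in>Basis. g b' *\<^sub>R b') \<bullet> b)) = (\<Prod>b\<in>Basis. f b (g b))" for g
    by (simp cong: prod.cong)
  show "integrable lborel (\<lambda>x::'a. \<Prod>b\<in>Basis. f b (x \<bullet> b))"
    unfolding lborel_eq[where 'a='a] integrable_distr_eq[OF T F] coords
    by (rule product_integrable_prod) (auto intro: int)
  show "(LINT x|lborel. (\<Prod>b\<in>Basis. f b (x \<bullet> b))) = (\<Prod>b\<in>Basis. LINT y|lborel. f b y)"
    unfolding lborel_eq[where 'a='a] integral_distr[OF T F] coords
    by (rule product_integral_prod) (auto intro: int)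
qed

lemma cis_minus_inner_eq_prod:
  fixes x \<xi> :: "'a::euclidean_space"
  shows "cis (- (x \<bullet> \<xi>)) = (\<Prod>b\<in>Basis. cis (- ((x \<bullet> b) * (\<xi> \<bullet> b))))"
  unfolding euclidean_inner[of x \<xi>]
  by (simp add: cis_conv_exp sum_distrib_left exp_sum flip: sum_negf)

lemma Lambda1_symbol_eq_sum_Basis: "Lambda1_symbol \<xi> = (\<Sum>b\<in>Basis. \<bar>\<xi> \<bullet> b\<bar>)"
proof -
  have Basis: "(Basis :: (real^'a) set) = range (\<lambda>i. axis i 1)"
    by (auto simp: Basis_vec_def)
  have "inj (\<lambda>i::'a. axis i (1::real))" by (auto simp: inj_on_def axis_eq_axis)
  then show ?thesis
    unfolding Basis by (simp add: Lambda1_symbol_def sum.reindex cart_eq_inner_axis)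
qed

lemma multiplier_exp_Lambda1_symbol:
  assumes l: "l > 0"
  shows "multiplier_with_L1_kernel (\<lambda>\<xi>::real^'n. exp (- (l * Lambda1_symbol \<xi>))) 1"
proof -
  define K where "K x = (\<Prod>b\<in>Basis. complex_of_real (poisson_kernel l (x \<bullet> b)))" for x :: "real^'n"
  have "integrable lborel K"
    unfolding K_def using integrable_poisson_kernel_cis[OF l, of 0]
    by (intro integrable_prod_Basis) simp
  moreover have "fourier_transform K \<xi> = exp (- (l * Lambda1_symbol \<xi>))" for \<xi> :: "real^'n"
  proof -
    have "fourier_transform K \<xi>
        = (LINT x|lborel. (\<Prod>b\<in>Basis. complex_of_real (poisson_kernel l (x \<bullet> b)) * cis (- ((x \<bullet> b) * (\<xi> \<bullet> b)))))"
      by (simp add: fourier_transform_def K_def cis_minus_inner_eq_prod prod.distrib)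
    also have "\<dots> = (\<Prod>b\<in>Basis. exp (- (l * \<bar>\<xi> \<bullet> b\<bar>)))"
      by (subst integral_prod_Basis[where f = "\<lambda>b y. complex_of_real (poisson_kernel l y) * cis (- (y * (\<xi> \<bullet> b)))"])
         (simp_all add: integrable_poisson_kernel_cis[OF l] fourier_poisson_kernel[OF l])
    also have "\<dots> = exp (- (l * Lambda1_symbol \<xi>))"
      by (simp add: Lambda1_symbol_eq_sum_Basis exp_sum sum_distrib_left flip: sum_negf)
    finally show ?thesis by simp
  qed
  moreover have "(LINT x|lborel. norm (K x)) = 1"
  proof -
    have "norm (K x) = (\<Prod>b\<in>Basis. poisson_kernel l (x \<bullet> b))" for x
      using l by (simp add: K_def prod_norm[symmetric] poisson_kernel_nonneg)
    then show ?thesis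
      by (simp add: integral_prod_Basis[where f = "\<lambda>_. poisson_kernel l"]
          integrable_poisson_kernel[OF l] integral_poisson_kernel[OF l])
  qed
  ultimately show ?thesis
    unfolding multiplier_with_L1_kernel_def by auto
qed

theorem lemma4p3:
  fixes c \<kappa> :: real
  assumes "c > 0" and "\<kappa> \<ge> 1"
  shows "\<exists>M. \<forall>s t. 0 \<le> s \<and> s \<le> t \<longrightarrow>
           ((\<forall>\<xi>::real^'n. E_symbol c \<kappa> s t \<xi> = 1) \<or>
            multiplier_with_L1_kernel (E_symbol c \<kappa> s t :: real^'n \<Rightarrow> real) M)"
proof -
  have "(\<forall>\<xi>::real^'n. E_symbol c \<kappa> s t \<xi> = 1) \<or> multiplier_with_L1_kernel (E_symbol c \<kappa> s t :: real^'n \<Rightarrow> real) 1"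
    if st: "0 \<le> s" "s \<le> t" for s t
  proof -
    define a where "a = (t - s) powr (1/\<kappa>) + s powr (1/\<kappa>) - t powr (1/\<kappa>)"
    have "((t - s) + s) powr (1/\<kappa>) \<le> (t - s) powr (1/\<kappa>) + s powr (1/\<kappa>)"
      using st assms by (intro powr_add_le_add_powr) auto
    then have "a \<ge> 0" by (simp add: a_def)
    have E: "E_symbol c \<kappa> s t = (\<lambda>\<xi>::real^'n. exp (- ((c * a) * Lambda1_symbol \<xi>)))"
      by (simp add: fun_eq_iff E_symbol_def a_def)
    show ?thesis
    proof (cases "a = 0")
      case True
      then show ?thesis by (simp add: E)
    next
      case False
      with \<open>a \<ge> 0\<close> \<open>c > 0\<close> have "c * a > 0" by simp
      then show ?thesis unfolding E by (simp add: multiplier_exp_Lambda1_symbol)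
    qed
  qed
  then show ?thesis by blast
qed

end
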